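(* Let $(P,\mathcal{L})$ be a linear system with $|\mathcal{L}| > \nu_2(P,\mathcal{L})$. Let $p,q\in P$ be two distinct points such that $\deg(p)=\Delta(P,\mathcal{L})$ and $\deg(q)=\max\{\deg(x): x\in P\setminus\{p\}\}$. If $$|\mathcal{L}| \le \deg(p)+\deg(q)+\nu_2(P,\mathcal{L})-3,$$ then $\tau(P,\mathcal{L}) \le \nu_2(P,\mathcal{L})-1$.
   Context: A linear system is a pair $(P,\mathcal{L})$ where $P$ is a finite set (of points) and $\mathcal{L}$ is a family of subsets of $P$ (lines) such that $|l\cap l'|\le 1$ for every pair of distinct $l,l'\in\mathcal{L}$. A transversal is a set $T\subseteq P$ with $T\cap l\neq\emptyset$ for every $l\in\mathcal{L}$; $\tau(P,\mathcal{L})$ is the minimum cardinality of a transversal. A 2-packing is a set $R\subseteq\mathcal{L}$ such that no three distinct lines of $R$ have a common point; $\nu_2(P,\mathcal{L})$ is the maximum cardinality of a 2-packing. For $x\in P$, $\mathcal{L}_x$ is the set of lines containing $x$, $\deg(x)=|\mathcal{L}_x|$, and $\Delta(P,\mathcal{L})=\max_{x\in P}\deg(x)$. *)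

theory Defs
  imports Main
begin

definition linear_system :: "'a set \<Rightarrow> 'a set set \<Rightarrow> bool" where
  "linear_system P L \<longleftrightarrow> finite P \<and> (\<forall>l\<in>L. l \<subseteq> P \<and> l \<noteq> {}) \<and>
     (\<forall>l\<in>L. \<forall>l'\<in>L. l \<noteq> l' \<longrightarrow> card (l \<inter> l') \<le> 1)"

definition is_transversal :: "'a set \<Rightarrow> 'a set set \<Rightarrow> 'a set \<Rightarrow> bool" where
  "is_transversal P L T \<longleftrightarrow> T \<subseteq> P \<and> (\<forall>l\<in>L. T \<inter> l \<noteq> {})"

definition tau :: "'a set \<Rightarrow> 'a set set \<Rightarrow> nat" where
  "tau P L = Min {card T | T. is_transversal P L T}"

definition is_2packing :: "'a set set \<Rightarrow> 'a set set \<Rightarrow> bool" where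
  "is_2packing L R \<longleftrightarrow> R \<subseteq> L \<and>
     (\<forall>l1\<in>R. \<forall>l2\<in>R. \<forall>l3\<in>R. l1 \<noteq> l2 \<and> l1 \<noteq> l3 \<and> l2 \<noteq> l3 \<longrightarrow> l1 \<inter> l2 \<inter> l3 = {})"

definition nu2 :: "'a set \<Rightarrow> 'a set set \<Rightarrow> nat" where
  "nu2 P L = Max {card R | R. is_2packing L R}"

definition deg :: "'a set set \<Rightarrow> 'a \<Rightarrow> nat" where
  "deg L x = card {l \<in> L. x \<in> l}"

definition max_deg :: "'a set \<Rightarrow> 'a set set \<Rightarrow> nat" where
  "max_deg P L = Max (deg L ` P)"

end

theory Submission
  imports Defs
begin

(* Let A and B be the lines through p and through q, and M the lines through neither.
   Counting gives |M| + 3 <= nu2 + |A \<inter> B|, where |A \<inter> B| <= 1. The points p, q together with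
   one point on each line of M form a transversal of size |M| + 2, which settles the case where
   p and q are not joined by a line. If q lies on at most one line, p together with one point
   on each line missing p is small enough. Otherwise let l0 be the line pq and b another line
   through q. If two lines of M meet, their common point saves one point. If the lines of M are
   pairwise disjoint, either every other line through p meets b at a point of some line of M,
   and then q together with points of M chosen on b is a transversal of size |M| + 1, or some
   line a through p does not, and then {l0, a, b} \<union> M is a 2-packing, so |M| + 3 <= nu2. *)

definition lines_through :: "'a set set \<Rightarrow> 'a \<Rightarrow> 'a set set" where
  "lines_through L x = {l \<in> L. x \<in> l}"

definition lines_avoiding :: "'a set set \<Rightarrow> 'a \<Rightarrow> 'a \<Rightarrow> 'a set set" where
  "lines_avoiding L p q = {l \<in> L. p \<notin> l \<and> q \<notin> l}"

lemma deg_eq_card_lines_through: "deg L x = card (lines_through L x)"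
  by (simp add: deg_def lines_through_def)

lemma linear_system_finite_lines:
  assumes "linear_system P L"
  shows "finite L"
proof -
  have "L \<subseteq> Pow P" using assms by (auto simp: linear_system_def)
  then show ?thesis using assms by (auto simp: linear_system_def intro: finite_subset)
qed

lemma linear_system_line_eqI:
  assumes "linear_system P L" "l \<in> L" "l' \<in> L" "x \<in> l \<inter> l'" "y \<in> l \<inter> l'" "x \<noteq> y"
  shows "l = l'"
proof (rule ccontr)
  assume "l \<noteq> l'"
  then have "card (l \<inter> l') \<le> 1" using assms(1-3) by (simp add: linear_system_def)
  moreover have "finite (l \<inter> l')"
    using assms(1,2) unfolding linear_system_def by (meson finite_Int finite_subset)
  moreover have "{x, y} \<subseteq> l \<inter> l'" using assms(4,5) by blast
  ultimately have "card {x, y} \<le> 1" by (meson card_mono le_trans)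
  then show False using assms(6) by simp
qed

lemma linear_system_Int_eq_singleton:
  assumes "linear_system P L" "l \<in> L" "l' \<in> L" "l \<noteq> l'" "x \<in> l \<inter> l'"
  shows "l \<inter> l' = {x}"
  using linear_system_line_eqI[OF assms(1-3) assms(5)] assms(4,5) by blast

lemma tau_le_card:
  assumes "linear_system P L" "is_transversal P L T"
  shows "tau P L \<le> card T"
proof -
  have "{card T |T. is_transversal P L T} \<subseteq> card ` Pow P"
    by (auto simp: is_transversal_def)
  moreover have "finite P" using assms(1) by (simp add: linear_system_def)
  ultimately have "finite {card T |T. is_transversal P L T}"
    by (meson finite_Pow_iff finite_imageI finite_subset)
  then show ?thesis unfolding tau_def using assms(2) by (auto intro: Min_le)
qed

lemma card_le_nu2:
  assumes "linear_system P L" "is_2packing L R"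
  shows "card R \<le> nu2 P L"
proof -
  have "{card R |R. is_2packing L R} \<subseteq> card ` Pow L"
    by (auto simp: is_2packing_def)
  then have "finite {card R |R. is_2packing L R}"
    using linear_system_finite_lines[OF assms(1)] by (meson finite_Pow_iff finite_imageI finite_subset)
  then show ?thesis unfolding nu2_def using assms(2) by (auto intro: Max_ge)
qed

lemma ex_hitting_set:
  assumes "finite S" "{} \<notin> S"
    and "\<And>m x y. m \<in> S \<Longrightarrow> x \<in> X \<inter> m \<Longrightarrow> y \<in> X \<inter> m \<Longrightarrow> x = y"
  obtains T where "T \<subseteq> \<Union>S" "card T \<le> card S" "\<And>m. m \<in> S \<Longrightarrow> T \<inter> m \<noteq> {}"
    "X \<inter> \<Union>S \<subseteq> T"
proof -
  define g where "g m = (SOME x. x \<in> m \<and> (X \<inter> m \<noteq> {} \<longrightarrow> x \<in> X))" for m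
  have g: "g m \<in> m \<and> (X \<inter> m \<noteq> {} \<longrightarrow> g m \<in> X)" if "m \<in> S" for m
  proof -
    have "\<exists>x. x \<in> m \<and> (X \<inter> m \<noteq> {} \<longrightarrow> x \<in> X)"
      using that assms(2) by (cases "X \<inter> m = {}") auto
    then show ?thesis unfolding g_def by (rule someI_ex)
  qed
  show ?thesis
  proof (rule that[of "g ` S"])
    show "g ` S \<subseteq> \<Union>S" using g by blast
    show "card (g ` S) \<le> card S" using assms(1) by (rule card_image_le)
    show "g ` S \<inter> m \<noteq> {}" if "m \<in> S" for m using g that by blast
    show "X \<inter> \<Union>S \<subseteq> g ` S"
    proof
      fix x assume "x \<in> X \<inter> \<Union>S"
      then obtain m where "m \<in> S" "x \<in> X \<inter> m" by blast
      with g assms(3) have "g m = x" by blast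
      with \<open>m \<in> S\<close> show "x \<in> g ` S" by blast
    qed
  qed
qed

lemma tau_le_card_add_card_missed:
  assumes "linear_system P L" "T \<subseteq> P"
  shows "tau P L \<le> card T + card {l \<in> L. T \<inter> l = {}}"
proof -
  let ?S = "{l \<in> L. T \<inter> l = {}}"
  have "finite ?S" "{} \<notin> ?S"
    using linear_system_finite_lines[OF assms(1)] assms(1) by (auto simp: linear_system_def)
  then obtain C where C: "C \<subseteq> \<Union>?S" "card C \<le> card ?S" "\<And>l. l \<in> ?S \<Longrightarrow> C \<inter> l \<noteq> {}"
    by (rule ex_hitting_set[where X = "{}"]) auto
  have "\<Union>?S \<subseteq> P" using assms(1) by (auto simp: linear_system_def)
  then have "is_transversal P L (T \<union> C)"
    using C(1,3) assms(2) unfolding is_transversal_def by blast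
  then have "tau P L \<le> card (T \<union> C)" by (rule tau_le_card[OF assms(1)])
  also have "\<dots> \<le> card T + card C" by (rule card_Un_le)
  finally show ?thesis using C(2) by linarith
qed

lemma lines_through_Int_eq_singleton:
  assumes "linear_system P L" "p \<noteq> q" "l0 \<in> lines_through L p \<inter> lines_through L q"
  shows "lines_through L p \<inter> lines_through L q = {l0}"
  using assms(3) linear_system_line_eqI[OF assms(1) _ _ _ _ assms(2), of _ l0]
  by (auto simp: lines_through_def)

lemma card_lines_through_avoiding:
  assumes "finite L"
  shows "card L + card (lines_through L p \<inter> lines_through L q)
    = deg L p + deg L q + card (lines_avoiding L p q)"
proof -
  let ?A = "lines_through L p" and ?B = "lines_through L q"
  have "L = (?A \<union> ?B) \<union> lines_avoiding L p q" "(?A \<union> ?B) \<inter> lines_avoiding L p q = {}"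
    by (auto simp: lines_through_def lines_avoiding_def)
  then have "card L = card (?A \<union> ?B) + card (lines_avoiding L p q)"
    using assms by (metis card_Un_disjoint finite_Un)
  moreover have "card ?A + card ?B = card (?A \<union> ?B) + card (?A \<inter> ?B)"
    using assms by (intro card_Un_Int) (auto simp: lines_through_def)
  ultimately show ?thesis by (simp add: deg_eq_card_lines_through)
qed

lemma tau_add_deg_le:
  assumes "linear_system P L" "p \<in> P"
  shows "tau P L + deg L p \<le> card L + 1"
proof -
  have "{l \<in> L. {p} \<inter> l = {}} = L - lines_through L p"
    by (auto simp: lines_through_def)
  then have "tau P L \<le> 1 + card (L - lines_through L p)"
    using tau_le_card_add_card_missed[OF assms(1), of "{p}"] assms(2) by simp
  moreover have "card (L - lines_through L p) = card L - deg L p"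
    using linear_system_finite_lines[OF assms(1)]
    by (simp add: card_Diff_subset deg_eq_card_lines_through lines_through_def)
  moreover have "deg L p \<le> card L"
    using linear_system_finite_lines[OF assms(1)] by (simp add: deg_def card_mono)
  ultimately show ?thesis by linarith
qed

lemma tau_le_card_lines_avoiding_add_2:
  assumes "linear_system P L" "p \<in> P" "q \<in> P"
  shows "tau P L \<le> card (lines_avoiding L p q) + 2"
proof -
  have "{l \<in> L. {p, q} \<inter> l = {}} = lines_avoiding L p q"
    by (auto simp: lines_avoiding_def)
  moreover have "card {p, q} \<le> 2" by (simp add: card_insert_le_m1)
  ultimately show ?thesis
    using tau_le_card_add_card_missed[OF assms(1), of "{p, q}"] assms(2,3) by simp
qed

lemma tau_le_card_lines_avoiding_add_1_if_meet:
  assumes "linear_system P L" "p \<in> P" "q \<in> P"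
    and "m1 \<in> lines_avoiding L p q" "m2 \<in> lines_avoiding L p q" "m1 \<noteq> m2" "x \<in> m1 \<inter> m2"
  shows "tau P L \<le> card (lines_avoiding L p q) + 1"
proof -
  let ?M = "lines_avoiding L p q"
  have "finite ?M"
    using linear_system_finite_lines[OF assms(1)] by (simp add: lines_avoiding_def)
  have "x \<in> P" using assms(1,4,7) by (auto simp: lines_avoiding_def linear_system_def)
  have "{l \<in> L. {p, q, x} \<inter> l = {}} \<subseteq> ?M - {m1, m2}"
    using assms(7) by (auto simp: lines_avoiding_def)
  then have "card {l \<in> L. {p, q, x} \<inter> l = {}} \<le> card (?M - {m1, m2})"
    using \<open>finite ?M\<close> by (intro card_mono) auto
  also have "\<dots> = card ?M - 2"
    using assms(4-6) \<open>finite ?M\<close> by (simp add: card_Diff_subset)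
  finally have "card {l \<in> L. {p, q, x} \<inter> l = {}} \<le> card ?M - 2" .
  moreover have "card {p, q, x} \<le> 3" by (simp add: card_insert_le_m1)
  moreover have "2 \<le> card ?M"
    using assms(4-6) \<open>finite ?M\<close> card_mono[of ?M "{m1, m2}"] by simp
  ultimately show ?thesis
    using tau_le_card_add_card_missed[OF assms(1), of "{p, q, x}"] assms(2,3) \<open>x \<in> P\<close>
    by simp
qed

lemma tau_le_card_lines_avoiding_add_1_if_covered:
  assumes "linear_system P L" "q \<in> P" "b \<in> lines_through L q"
    and "\<And>a. a \<in> lines_through L p - lines_through L q \<Longrightarrow>
      \<exists>x \<in> a \<inter> b. \<exists>m \<in> lines_avoiding L p q. x \<in> m"
  shows "tau P L \<le> card (lines_avoiding L p q) + 1"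
proof -
  let ?M = "lines_avoiding L p q"
  have "finite ?M" "{} \<notin> ?M"
    using assms(1) linear_system_finite_lines[OF assms(1)]
    by (auto simp: lines_avoiding_def linear_system_def)
  moreover have "x = y" if "m \<in> ?M" "x \<in> b \<inter> m" "y \<in> b \<inter> m" for m x y
  proof -
    have "m \<noteq> b" using that(1) assms(3) by (auto simp: lines_avoiding_def lines_through_def)
    then show ?thesis
      using linear_system_line_eqI[OF assms(1), of m b] that assms(3)
      by (auto simp: lines_avoiding_def lines_through_def)
  qed
  ultimately obtain C where C: "C \<subseteq> \<Union>?M" "card C \<le> card ?M" "\<And>m. m \<in> ?M \<Longrightarrow> C \<inter> m \<noteq> {}"
    "b \<inter> \<Union>?M \<subseteq> C"
    by (rule ex_hitting_set) auto
  have "\<Union>?M \<subseteq> P" using assms(1) by (auto simp: lines_avoiding_def linear_system_def)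
  moreover have "insert q C \<inter> l \<noteq> {}" if "l \<in> L" for l
  proof (cases "l \<in> lines_through L p - lines_through L q")
    case True
    then show ?thesis using assms(4) C(4) by blast
  next
    case False
    with that C(3) show ?thesis by (auto simp: lines_through_def lines_avoiding_def)
  qed
  ultimately have "is_transversal P L (insert q C)"
    using C(1) assms(2) unfolding is_transversal_def by blast
  then have "tau P L \<le> card (insert q C)" by (rule tau_le_card[OF assms(1)])
  also have "\<dots> \<le> card C + 1" by (simp add: card_insert_le_m1)
  finally show ?thesis using C(2) by linarith
qed

lemma is_2packing_triangle_Un:
  assumes "{l1, l2, l3} \<union> M \<subseteq> L" "pairwise disjnt M" "l1 \<inter> l2 \<inter> l3 = {}"
    and "\<And>m. m \<in> M \<Longrightarrow> m \<inter> l1 \<inter> l2 = {} \<and> m \<inter> l1 \<inter> l3 = {} \<and> m \<inter> l2 \<inter> l3 = {}"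
  shows "is_2packing L ({l1, l2, l3} \<union> M)"
  unfolding is_2packing_def
proof (intro conjI ballI impI assms(1))
  let ?T = "{l1, l2, l3}"
  fix r1 r2 r3 assume r: "r1 \<in> ?T \<union> M" "r2 \<in> ?T \<union> M" "r3 \<in> ?T \<union> M"
    and distinct: "r1 \<noteq> r2 \<and> r1 \<noteq> r3 \<and> r2 \<noteq> r3"
  show "r1 \<inter> r2 \<inter> r3 = {}"
  proof (rule ccontr)
    assume "r1 \<inter> r2 \<inter> r3 \<noteq> {}"
    then obtain x where x: "x \<in> r1" "x \<in> r2" "x \<in> r3" by blast
    have in_M_unique: "r = r'" if "r \<in> M" "r' \<in> M" "x \<in> r" "x \<in> r'" for r r'
      using assms(2) that unfolding pairwise_def disjnt_def by blast
    have not_in_M: "False" if "r \<in> M" "x \<in> r" "s \<in> ?T" "t \<in> ?T" "s \<noteq> t" "x \<in> s" "x \<in> t" for r s t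
      using assms(4)[OF that(1)] that(2-7) by blast
    have not_in_T: "False" if "r1 \<in> ?T" "r2 \<in> ?T" "r3 \<in> ?T"
      using that distinct x assms(3) by auto
    show False
      using r distinct x in_M_unique not_in_M not_in_T by (metis Un_iff)
  qed
qed

lemma card_lines_avoiding_add_3_le_nu2:
  assumes "linear_system P L" "p \<noteq> q"
    and "l0 \<in> lines_through L p \<inter> lines_through L q"
    and "a \<in> lines_through L p" "a \<noteq> l0" "b \<in> lines_through L q" "b \<noteq> l0"
    and "pairwise disjnt (lines_avoiding L p q)"
    and "\<And>x m. x \<in> a \<inter> b \<Longrightarrow> m \<in> lines_avoiding L p q \<Longrightarrow> x \<notin> m"
  shows "card (lines_avoiding L p q) + 3 \<le> nu2 P L"
proof -
  let ?M = "lines_avoiding L p q"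
  have lines: "l0 \<in> L" "p \<in> l0" "q \<in> l0" "a \<in> L" "p \<in> a" "b \<in> L" "q \<in> b"
    using assms(3,4,6) by (auto simp: lines_through_def)
  have l0_a: "l0 \<inter> a = {p}"
    using linear_system_Int_eq_singleton[OF assms(1) lines(1,4)] lines(2,5) assms(5) by simp
  have l0_b: "l0 \<inter> b = {q}"
    using linear_system_Int_eq_singleton[OF assms(1) lines(1,6)] lines(3,7) assms(7) by simp
  have "p \<notin> b" using l0_b lines assms(2) by blast
  have "is_2packing L ({l0, a, b} \<union> ?M)"
  proof (rule is_2packing_triangle_Un)
    show "{l0, a, b} \<union> ?M \<subseteq> L" using lines by (auto simp: lines_avoiding_def)
    show "l0 \<inter> a \<inter> b = {}" using l0_a \<open>p \<notin> b\<close> by simp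
    show "m \<inter> l0 \<inter> a = {} \<and> m \<inter> l0 \<inter> b = {} \<and> m \<inter> a \<inter> b = {}" if "m \<in> ?M" for m
    proof -
      have "p \<notin> m" "q \<notin> m" using that by (simp_all add: lines_avoiding_def)
      then have "m \<inter> (l0 \<inter> a) = {}" "m \<inter> (l0 \<inter> b) = {}" using l0_a l0_b by auto
      moreover have "m \<inter> a \<inter> b = {}" using assms(9)[OF _ that] by blast
      ultimately show ?thesis by (simp add: Int_assoc)
    qed
  qed (rule assms(8))
  then have "card ({l0, a, b} \<union> ?M) \<le> nu2 P L" by (rule card_le_nu2[OF assms(1)])
  moreover have "card ({l0, a, b} \<union> ?M) = card ?M + 3"
  proof -
    have "a \<noteq> b" using lines \<open>p \<notin> b\<close> by blast
    moreover have "l0 \<notin> ?M" "a \<notin> ?M" "b \<notin> ?M" using lines by (auto simp: lines_avoiding_def)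
    moreover have "finite ?M"
      using linear_system_finite_lines[OF assms(1)] by (simp add: lines_avoiding_def)
    ultimately show ?thesis using assms(5,7) by simp
  qed
  ultimately show ?thesis by simp
qed

lemma tau_or_nu2_bound_if_joining_line:
  assumes "linear_system P L" "p \<in> P" "q \<in> P" "p \<noteq> q"
    and "l0 \<in> lines_through L p \<inter> lines_through L q" "b \<in> lines_through L q" "b \<noteq> l0"
  shows "tau P L \<le> card (lines_avoiding L p q) + 1 \<or> card (lines_avoiding L p q) + 3 \<le> nu2 P L"
proof (cases "pairwise disjnt (lines_avoiding L p q)")
  case False
  then obtain m1 m2 x where "m1 \<in> lines_avoiding L p q" "m2 \<in> lines_avoiding L p q" "m1 \<noteq> m2"
    "x \<in> m1 \<inter> m2"
    unfolding pairwise_def disjnt_def by blast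
  then show ?thesis using tau_le_card_lines_avoiding_add_1_if_meet[OF assms(1-3)] by blast
next
  case disjoint: True
  show ?thesis
  proof (cases "\<forall>a \<in> lines_through L p - lines_through L q.
      \<exists>x \<in> a \<inter> b. \<exists>m \<in> lines_avoiding L p q. x \<in> m")
    case True
    then show ?thesis using tau_le_card_lines_avoiding_add_1_if_covered[OF assms(1,3,6)] by blast
  next
    case False
    then obtain a where a: "a \<in> lines_through L p - lines_through L q"
      and "\<And>x m. x \<in> a \<inter> b \<Longrightarrow> m \<in> lines_avoiding L p q \<Longrightarrow> x \<notin> m"
      by blast
    moreover have "a \<noteq> l0" using a assms(5) by blast
    ultimately show ?thesis
      using card_lines_avoiding_add_3_le_nu2[OF assms(1,4,5) _ _ assms(6,7) disjoint] by blast
  qed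
qed

lemma tau_add_1_le_nu2:
  assumes "linear_system P L" "p \<in> P" "q \<in> P" "p \<noteq> q"
    and "card L + 3 \<le> deg L p + deg L q + nu2 P L"
  shows "tau P L + 1 \<le> nu2 P L"
proof -
  let ?A = "lines_through L p" and ?B = "lines_through L q" and ?M = "lines_avoiding L p q"
  have count: "card L + card (?A \<inter> ?B) = deg L p + deg L q + card ?M"
    using card_lines_through_avoiding[OF linear_system_finite_lines[OF assms(1)]] .
  consider (few) "deg L q \<le> 1" | (disjoint) "?A \<inter> ?B = {}"
    | (joined) l0 where "l0 \<in> ?A \<inter> ?B" "2 \<le> deg L q"
    by (cases "deg L q \<le> 1") auto
  then show ?thesis
  proof cases
    case few
    then show ?thesis using tau_add_deg_le[OF assms(1,2)] assms(5) by linarith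
  next
    case disjoint
    then show ?thesis using tau_le_card_lines_avoiding_add_2[OF assms(1-3)] count assms(5) by simp
  next
    case joined
    obtain b where "b \<in> ?B" "b \<noteq> l0"
    proof -
      have "\<not> ?B \<subseteq> {l0}"
        using joined(2) card_mono[of "{l0}" ?B] by (auto simp: deg_eq_card_lines_through)
      then show ?thesis using that by blast
    qed
    then have "tau P L \<le> card ?M + 1 \<or> card ?M + 3 \<le> nu2 P L"
      by (rule tau_or_nu2_bound_if_joining_line[OF assms(1-4) joined(1)])
    moreover have "card ?M + 2 \<le> nu2 P L"
      using count lines_through_Int_eq_singleton[OF assms(1,4) joined(1)] assms(5) by simp
    ultimately show ?thesis using tau_le_card_lines_avoiding_add_2[OF assms(1-3)] by linarith
  qed
qed

theorem theorem2p1: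
  fixes P :: "'a set" and L :: "'a set set" and p q :: 'a
  assumes "linear_system P L"
    and "card L > nu2 P L"
    and "p \<in> P" and "q \<in> P" and "p \<noteq> q"
    and "deg L p = max_deg P L"
    and "deg L q = Max (deg L ` (P - {p}))"
    and "int (card L) \<le> int (deg L p) + int (deg L q) + int (nu2 P L) - 3"
  shows "int (tau P L) \<le> int (nu2 P L) - 1"
proof -
  have "card L + 3 \<le> deg L p + deg L q + nu2 P L" using assms(8) by linarith
  then have "tau P L + 1 \<le> nu2 P L" by (rule tau_add_1_le_nu2[OF assms(1,3-5)])
  then show ?thesis by linarith
qed

end
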